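(* In the category $\mathbf{FCLS}$ of finite closure spaces, every descent morphism is an effective descent morphism.
   Context: A closure space is a pair $(A,\mathcal{C}_A)$ where $A$ is a set and $\mathcal{C}_A$ is a set of subsets of $A$ closed under arbitrary intersections (so $A\in\mathcal{C}_A$). $\mathbf{CLS}$ has closure spaces as objects and, as morphisms $\alpha:A\to B$, maps with $\alpha^{-1}(B')\in\mathcal{C}_A$ for all $B'\in\mathcal{C}_B$; $\mathbf{FCLS}$ is its full subcategory of closure spaces with finite underlying set (it has pullbacks and coequalizers of equivalence relations). For a morphism $p:E\to B$ in a category $\mathbf{C}$ with pullbacks, a descent data for $p$ is a triple $(C,\gamma,\xi)$ with $\gamma:C\to E$, $\xi:E\times_BC\to C$ (pullback of $p$ and $p\gamma$, projections $\pi_1,\pi_2$) such that $\gamma\xi=\pi_1$, $\xi\langle\gamma,1_C\rangle=1_C$, $\xi\circ(E\times_B\xi)=\xi\circ(E\times_B\pi_2)$; a morphism $(C,\gamma,\xi)\to(C',\gamma',\xi')$ is $f:C\to C'$ with $\gamma'f=\gamma$ and $f\xi=\xi'\circ(E\times_Bf)$. This gives a category $\mathrm{Des}(p)$ and a comparison functor $K^p:(\mathbf{C}\downarrow B)\to\mathrm{Des}(p)$, $K^p(A,\alpha)=(E\times_BA,\pi_1,E\times_B\pi_2)$. The morphism $p$ is a descent morphism if $K^p$ is fully faithful (equivalently, $p$ is a pullback-stable regular epimorphism), and an effective descent morphism if $K^p$ is an equivalence of categories. *)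

theory Defs
  imports Main
begin

text \<open>Closure spaces: C is a family of subsets of A closed under arbitrary
  intersections (the empty intersection being A itself).\<close>
definition closure_space :: "'a set \<Rightarrow> 'a set set \<Rightarrow> bool" where
  "closure_space A C \<longleftrightarrow> C \<subseteq> Pow A \<and> A \<in> C \<and> (\<forall>S. S \<subseteq> C \<and> S \<noteq> {} \<longrightarrow> \<Inter>S \<in> C)"

definition fcls :: "'a set \<Rightarrow> 'a set set \<Rightarrow> bool" where
  "fcls A C \<longleftrightarrow> closure_space A C \<and> finite A"

text \<open>Morphisms of CLS (maps are identified when they agree on the carrier).\<close>
definition cls_mor :: "'a set \<Rightarrow> 'a set set \<Rightarrow> 'b set \<Rightarrow> 'b set set \<Rightarrow> ('a \<Rightarrow> 'b) \<Rightarrow> bool" where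
  "cls_mor A CA B CB f \<longleftrightarrow> f ` A \<subseteq> B \<and> (\<forall>B'\<in>CB. {x\<in>A. f x \<in> B'} \<in> CA)"

text \<open>The (canonical) pullback of f : X \<rightarrow> Z and g : Y \<rightarrow> Z in CLS/FCLS:
  the set-theoretic pullback with the initial closure structure for the two projections.\<close>
definition pb_set :: "'x set \<Rightarrow> 'y set \<Rightarrow> ('x \<Rightarrow> 'z) \<Rightarrow> ('y \<Rightarrow> 'z) \<Rightarrow> ('x \<times> 'y) set" where
  "pb_set X Y f g = {(x, y). x \<in> X \<and> y \<in> Y \<and> f x = g y}"

definition pb_cl :: "'x set \<Rightarrow> 'x set set \<Rightarrow> 'y set \<Rightarrow> 'y set set \<Rightarrow> ('x \<Rightarrow> 'z) \<Rightarrow> ('y \<Rightarrow> 'z)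
    \<Rightarrow> ('x \<times> 'y) set set" where
  "pb_cl X CX Y CY f g =
     {{z \<in> pb_set X Y f g. fst z \<in> X' \<and> snd z \<in> Y'} | X' Y'. X' \<in> CX \<and> Y' \<in> CY}"

text \<open>The pullback E \<times>_B C is taken along p and
  p \<circ> gamma; E \<times>_B xi maps (e', (e, c)) to (e', xi (e, c)) and E \<times>_B pi2 maps it to (e', c).\<close>
definition descent_data ::
  "'e set \<Rightarrow> 'e set set \<Rightarrow> 'b set \<Rightarrow> 'b set set \<Rightarrow> ('e \<Rightarrow> 'b) \<Rightarrow>
   'c set \<Rightarrow> 'c set set \<Rightarrow> ('c \<Rightarrow> 'e) \<Rightarrow> ('e \<times> 'c \<Rightarrow> 'c) \<Rightarrow> bool" where
  "descent_data E CE B CB p C CC \<gamma> \<xi> \<longleftrightarrow>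
     fcls C CC \<and> cls_mor C CC E CE \<gamma> \<and>
     cls_mor (pb_set E C p (p \<circ> \<gamma>)) (pb_cl E CE C CC p (p \<circ> \<gamma>)) C CC \<xi> \<and>
     (\<forall>z \<in> pb_set E C p (p \<circ> \<gamma>). \<gamma> (\<xi> z) = fst z) \<and>
     (\<forall>c \<in> C. \<xi> (\<gamma> c, c) = c) \<and>
     (\<forall>e' \<in> E. \<forall>e \<in> E. \<forall>c \<in> C. p e' = p e \<and> p e = p (\<gamma> c) \<longrightarrow> \<xi> (e', \<xi> (e, c)) = \<xi> (e', c))"

definition des_mor ::
  "'e set \<Rightarrow> 'e set set \<Rightarrow> 'b set \<Rightarrow> 'b set set \<Rightarrow> ('e \<Rightarrow> 'b) \<Rightarrow>
   'c set \<Rightarrow> 'c set set \<Rightarrow> ('c \<Rightarrow> 'e) \<Rightarrow> ('e \<times> 'c \<Rightarrow> 'c) \<Rightarrow>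
   'd set \<Rightarrow> 'd set set \<Rightarrow> ('d \<Rightarrow> 'e) \<Rightarrow> ('e \<times> 'd \<Rightarrow> 'd) \<Rightarrow> ('c \<Rightarrow> 'd) \<Rightarrow> bool" where
  "des_mor E CE B CB p C CC \<gamma> \<xi> C' CC' \<gamma>' \<xi>' f \<longleftrightarrow>
     cls_mor C CC C' CC' f \<and> (\<forall>c \<in> C. \<gamma>' (f c) = \<gamma> c) \<and>
     (\<forall>z \<in> pb_set E C p (p \<circ> \<gamma>). f (\<xi> z) = \<xi>' (fst z, f (snd z)))"

definition des_iso ::
  "'e set \<Rightarrow> 'e set set \<Rightarrow> 'b set \<Rightarrow> 'b set set \<Rightarrow> ('e \<Rightarrow> 'b) \<Rightarrow>
   'c set \<Rightarrow> 'c set set \<Rightarrow> ('c \<Rightarrow> 'e) \<Rightarrow> ('e \<times> 'c \<Rightarrow> 'c) \<Rightarrow>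
   'd set \<Rightarrow> 'd set set \<Rightarrow> ('d \<Rightarrow> 'e) \<Rightarrow> ('e \<times> 'd \<Rightarrow> 'd) \<Rightarrow> ('c \<Rightarrow> 'd) \<Rightarrow> bool" where
  "des_iso E CE B CB p C CC \<gamma> \<xi> C' CC' \<gamma>' \<xi>' f \<longleftrightarrow>
     des_mor E CE B CB p C CC \<gamma> \<xi> C' CC' \<gamma>' \<xi>' f \<and>
     (\<exists>g. des_mor E CE B CB p C' CC' \<gamma>' \<xi>' C CC \<gamma> \<xi> g \<and>
          (\<forall>c \<in> C. g (f c) = c) \<and> (\<forall>d \<in> C'. f (g d) = d))"

definition slice_obj :: "'b set \<Rightarrow> 'b set set \<Rightarrow> 'a set \<Rightarrow> 'a set set \<Rightarrow> ('a \<Rightarrow> 'b) \<Rightarrow> bool" where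
  "slice_obj B CB A CA \<alpha> \<longleftrightarrow> fcls A CA \<and> cls_mor A CA B CB \<alpha>"

definition slice_mor ::
  "'a set \<Rightarrow> 'a set set \<Rightarrow> ('a \<Rightarrow> 'b) \<Rightarrow> 'a2 set \<Rightarrow> 'a2 set set \<Rightarrow> ('a2 \<Rightarrow> 'b) \<Rightarrow> ('a \<Rightarrow> 'a2) \<Rightarrow> bool" where
  "slice_mor A CA \<alpha> A' CA' \<alpha>' f \<longleftrightarrow> cls_mor A CA A' CA' f \<and> (\<forall>a \<in> A. \<alpha>' (f a) = \<alpha> a)"

text \<open>The comparison functor K^p: on objects (A, alpha) it gives
  (E \<times>_B A, pi1, E \<times>_B pi2), where E \<times>_B pi2 sends (e, (e', a)) to (e, a);
  on morphisms f it gives E \<times>_B f, i.e. (e, a) \<mapsto> (e, f a).\<close>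
definition K_xi :: "'e \<times> ('e \<times> 'a) \<Rightarrow> 'e \<times> 'a" where
  "K_xi z = (fst z, snd (snd z))"

definition K_mor :: "('a \<Rightarrow> 'a2) \<Rightarrow> 'e \<times> 'a \<Rightarrow> 'e \<times> 'a2" where
  "K_mor f z = (fst z, f (snd z))"

text \<open>p is a descent morphism: K^p is fully faithful.  Objects of the slice category are
  taken with carriers in nat; since all objects are finite, every object of (FCLS \<down> B) is
  isomorphic to such a one, so this is equivalent to full faithfulness on the whole slice.\<close>
definition descent_morphism :: "'e set \<Rightarrow> 'e set set \<Rightarrow> 'b set \<Rightarrow> 'b set set \<Rightarrow> ('e \<Rightarrow> 'b) \<Rightarrow> bool" where
  "descent_morphism E CE B CB p \<longleftrightarrow>
     (\<forall>(A :: nat set) CA \<alpha> (A' :: nat set) CA' \<alpha>'.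
        slice_obj B CB A CA \<alpha> \<longrightarrow> slice_obj B CB A' CA' \<alpha>' \<longrightarrow>
        (\<forall>g. des_mor E CE B CB p (pb_set E A p \<alpha>) (pb_cl E CE A CA p \<alpha>) fst K_xi
                                 (pb_set E A' p \<alpha>') (pb_cl E CE A' CA' p \<alpha>') fst K_xi g \<longrightarrow>
             (\<exists>f. slice_mor A CA \<alpha> A' CA' \<alpha>' f \<and> (\<forall>z \<in> pb_set E A p \<alpha>. K_mor f z = g z))) \<and>
        (\<forall>f1 f2. slice_mor A CA \<alpha> A' CA' \<alpha>' f1 \<longrightarrow> slice_mor A CA \<alpha> A' CA' \<alpha>' f2 \<longrightarrow>
             (\<forall>z \<in> pb_set E A p \<alpha>. K_mor f1 z = K_mor f2 z) \<longrightarrow> (\<forall>a \<in> A. f1 a = f2 a)))"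

text \<open>p is an effective descent morphism: K^p is an equivalence, i.e. fully faithful and
  essentially surjective.  Descent data are allowed to live on an arbitrary type 'c
  (the type parameter is universally quantified in any theorem using this notion).\<close>
definition effective_descent ::
  "'c itself \<Rightarrow> 'e set \<Rightarrow> 'e set set \<Rightarrow> 'b set \<Rightarrow> 'b set set \<Rightarrow> ('e \<Rightarrow> 'b) \<Rightarrow> bool" where
  "effective_descent _ E CE B CB p \<longleftrightarrow>
     descent_morphism E CE B CB p \<and>
     (\<forall>(C :: 'c set) CC \<gamma> \<xi>. descent_data E CE B CB p C CC \<gamma> \<xi> \<longrightarrow>
        (\<exists>(A :: nat set) CA \<alpha> f. slice_obj B CB A CA \<alpha> \<and>
           des_iso E CE B CB p C CC \<gamma> \<xi> (pb_set E A p \<alpha>) (pb_cl E CE A CA p \<alpha>) fst K_xi f))"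

end

theory Submission
  imports Defs
begin

text \<open>Full faithfulness of \<open>K\<^sup>p\<close> is the hypothesis, so only essential surjectivity is at
  stake, and it holds for every morphism \<open>p\<close> of finite closure spaces.  Given descent data
  \<open>(C, \<gamma>, \<xi>)\<close>, the action \<open>\<xi>\<close> makes the relation \<open>c \<sim> \<xi>(e, c)\<close> an equivalence on \<open>C\<close>;
  let \<open>A = C/\<sim>\<close> carry the quotient closure structure and \<open>\<alpha>[c] = p(\<gamma> c)\<close>.  Then
  \<open>c \<mapsto> (\<gamma> c, [c])\<close> and \<open>(e, [c]) \<mapsto> \<xi>(e, c)\<close> are mutually inverse maps of descent data
  between \<open>(C, \<gamma>, \<xi>)\<close> and \<open>K\<^sup>p(A, \<alpha>)\<close>.  The only delicate point is continuity of the
  second map, i.e. that every closed \<open>S \<subseteq> C\<close> has the form \<open>V \<inter> \<gamma>\<^sup>-\<^sup>1(X)\<close> with \<open>V\<close> closed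
  and \<open>\<sim>\<close>-saturated; here finiteness enters, through a maximal such representation.\<close>

lemma closure_space_subset: "closure_space A C \<Longrightarrow> X \<in> C \<Longrightarrow> X \<subseteq> A"
  unfolding closure_space_def by (elim conjE) blast

lemma closure_space_top: "closure_space A C \<Longrightarrow> A \<in> C"
  unfolding closure_space_def by (elim conjE)

lemma closure_space_Inter: "closure_space A C \<Longrightarrow> S \<subseteq> C \<Longrightarrow> S \<noteq> {} \<Longrightarrow> \<Inter>S \<in> C"
  unfolding closure_space_def by (elim conjE allE[where x = S]) simp

lemma closure_space_Int: "closure_space A C \<Longrightarrow> X \<in> C \<Longrightarrow> Y \<in> C \<Longrightarrow> X \<inter> Y \<in> C"
  using closure_space_Inter[of A C "{X, Y}"] by simp

lemma cls_mor_cong: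
  assumes "\<And>x. x \<in> A \<Longrightarrow> f x = g x"
  shows "cls_mor A CA B CB f \<longleftrightarrow> cls_mor A CA B CB g"
proof -
  have "f ` A = g ` A" "\<And>B'. {x \<in> A. f x \<in> B'} = {x \<in> A. g x \<in> B'}"
    using assms by auto
  then show ?thesis unfolding cls_mor_def by simp
qed

lemma cls_mor_comp:
  assumes "cls_mor A CA B CB f" "cls_mor B CB D CD g"
  shows "cls_mor A CA D CD (g \<circ> f)"
  unfolding cls_mor_def
proof (intro conjI ballI)
  show "(g \<circ> f) ` A \<subseteq> D"
    using assms unfolding cls_mor_def by auto
next
  fix D' assume "D' \<in> CD"
  then have "{x \<in> A. f x \<in> {y \<in> B. g y \<in> D'}} \<in> CA"
    using assms unfolding cls_mor_def by blast
  moreover have "{x \<in> A. f x \<in> {y \<in> B. g y \<in> D'}} = {x \<in> A. (g \<circ> f) x \<in> D'}"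
    using assms(1) unfolding cls_mor_def by auto
  ultimately show "{x \<in> A. (g \<circ> f) x \<in> D'} \<in> CA" by simp
qed

lemma cls_mor_into_pb:
  assumes "closure_space Z CZ" and "h ` Z \<subseteq> pb_set X Y f g"
    and "cls_mor Z CZ X CX (fst \<circ> h)" and "cls_mor Z CZ Y CY (snd \<circ> h)"
  shows "cls_mor Z CZ (pb_set X Y f g) (pb_cl X CX Y CY f g) h"
  unfolding cls_mor_def
proof (intro conjI ballI)
  fix P assume "P \<in> pb_cl X CX Y CY f g"
  then obtain X' Y' where P: "P = {z \<in> pb_set X Y f g. fst z \<in> X' \<and> snd z \<in> Y'}"
    and "X' \<in> CX" "Y' \<in> CY"
    unfolding pb_cl_def by blast
  then have "{z \<in> Z. (fst \<circ> h) z \<in> X'} \<inter> {z \<in> Z. (snd \<circ> h) z \<in> Y'} \<in> CZ"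
    using assms by (intro closure_space_Int) (auto simp: cls_mor_def)
  moreover have "{z \<in> Z. h z \<in> P} = {z \<in> Z. (fst \<circ> h) z \<in> X'} \<inter> {z \<in> Z. (snd \<circ> h) z \<in> Y'}"
    using assms(2) unfolding P by auto
  ultimately show "{z \<in> Z. h z \<in> P} \<in> CZ" by simp
qed (use assms(2) in simp)

definition final_cl :: "'a set \<Rightarrow> 'a set set \<Rightarrow> ('a \<Rightarrow> 'b) \<Rightarrow> 'b set set" where
  "final_cl A CA q = {Y. Y \<subseteq> q ` A \<and> {x \<in> A. q x \<in> Y} \<in> CA}"

lemma fcls_final_cl:
  assumes "fcls A CA"
  shows "fcls (q ` A) (final_cl A CA q)"
proof -
  have cs: "closure_space A CA" and "finite A"
    using assms unfolding fcls_def by auto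
  have "closure_space (q ` A) (final_cl A CA q)"
    unfolding closure_space_def
  proof (intro conjI allI impI)
    show "final_cl A CA q \<subseteq> Pow (q ` A)"
      unfolding final_cl_def by blast
    have "{x \<in> A. q x \<in> q ` A} = A"
      by blast
    then show "q ` A \<in> final_cl A CA q"
      using closure_space_top[OF cs] unfolding final_cl_def by simp
  next
    fix S assume S: "S \<subseteq> final_cl A CA q \<and> S \<noteq> {}"
    then have "(\<lambda>Y. {x \<in> A. q x \<in> Y}) ` S \<subseteq> CA"
      unfolding final_cl_def by blast
    then have "\<Inter>((\<lambda>Y. {x \<in> A. q x \<in> Y}) ` S) \<in> CA"
      using closure_space_Inter[OF cs] S by blast
    moreover have "\<Inter>((\<lambda>Y. {x \<in> A. q x \<in> Y}) ` S) = {x \<in> A. q x \<in> \<Inter>S}"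
      using S by auto
    moreover have "\<Inter>S \<subseteq> q ` A"
      using S unfolding final_cl_def by blast
    ultimately show "\<Inter>S \<in> final_cl A CA q"
      unfolding final_cl_def by simp
  qed
  with \<open>finite A\<close> show ?thesis
    unfolding fcls_def by simp
qed

lemma cls_mor_final_cl: "cls_mor A CA (q ` A) (final_cl A CA q) q"
  unfolding cls_mor_def final_cl_def by blast

lemma cls_mor_from_final_cl_iff:
  "cls_mor (q ` A) (final_cl A CA q) B CB h \<longleftrightarrow> cls_mor A CA B CB (h \<circ> q)"
proof -
  have "{x \<in> A. q x \<in> {k \<in> q ` A. h k \<in> B'}} = {x \<in> A. (h \<circ> q) x \<in> B'}" for B'
    by auto
  then show ?thesis
    unfolding cls_mor_def final_cl_def by (auto simp: image_comp)
qed

lemma equiv_classifier_nat: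
  assumes "finite A" and "equiv A r"
  obtains q :: "'a \<Rightarrow> nat" where "\<And>x y. x \<in> A \<Longrightarrow> y \<in> A \<Longrightarrow> q x = q y \<longleftrightarrow> (x, y) \<in> r"
proof -
  have "finite (A // r)"
    using finite_quotient[OF assms(1) equiv_type[OF assms(2)]] .
  then obtain h :: "'a set \<Rightarrow> nat" where h: "inj_on h (A // r)"
    using finite_imp_inj_to_nat_seg by meson
  have "h (r `` {x}) = h (r `` {y}) \<longleftrightarrow> (x, y) \<in> r" if "x \<in> A" "y \<in> A" for x y
  proof -
    have "h (r `` {x}) = h (r `` {y}) \<longleftrightarrow> r `` {x} = r `` {y}"
      using inj_on_eq_iff[OF h quotientI quotientI] that .
    also have "\<dots> \<longleftrightarrow> (x, y) \<in> r"
      using eq_equiv_class_iff[OF assms(2) that] .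
    finally show ?thesis .
  qed
  then show thesis
    by (rule that)
qed

locale fcls_descent_datum =
  fixes E :: "'e set" and CE :: "'e set set" and B :: "'b set" and CB :: "'b set set"
    and p :: "'e \<Rightarrow> 'b"
    and C :: "'c set" and CC :: "'c set set" and \<gamma> :: "'c \<Rightarrow> 'e" and \<xi> :: "'e \<times> 'c \<Rightarrow> 'c"
  assumes descent_data: "descent_data E CE B CB p C CC \<gamma> \<xi>"
    and fcls_E: "fcls E CE" and p_mor: "cls_mor E CE B CB p"
begin

lemma fcls_C: "fcls C CC"
  and gamma_mor: "cls_mor C CC E CE \<gamma>"
  and xi_mor: "cls_mor (pb_set E C p (p \<circ> \<gamma>)) (pb_cl E CE C CC p (p \<circ> \<gamma>)) C CC \<xi>"
  using descent_data unfolding descent_data_def by blast+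

lemma closure_space_C: "closure_space C CC"
  and finite_C: "finite C"
  using fcls_C unfolding fcls_def by blast+

lemma mem_pb_iff: "(e, c) \<in> pb_set E C p (p \<circ> \<gamma>) \<longleftrightarrow> e \<in> E \<and> c \<in> C \<and> p e = p (\<gamma> c)"
  unfolding pb_set_def by simp

lemma gamma_in: "c \<in> C \<Longrightarrow> \<gamma> c \<in> E"
  using gamma_mor unfolding cls_mor_def by blast

lemma xi_in: "e \<in> E \<Longrightarrow> c \<in> C \<Longrightarrow> p e = p (\<gamma> c) \<Longrightarrow> \<xi> (e, c) \<in> C"
  using xi_mor mem_pb_iff unfolding cls_mor_def by blast

lemma gamma_xi: "e \<in> E \<Longrightarrow> c \<in> C \<Longrightarrow> p e = p (\<gamma> c) \<Longrightarrow> \<gamma> (\<xi> (e, c)) = e"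
  using descent_data mem_pb_iff unfolding descent_data_def by fastforce

lemma xi_gamma: "c \<in> C \<Longrightarrow> \<xi> (\<gamma> c, c) = c"
  using descent_data unfolding descent_data_def by blast

lemma xi_xi:
  "e' \<in> E \<Longrightarrow> e \<in> E \<Longrightarrow> c \<in> C \<Longrightarrow> p e' = p e \<Longrightarrow> p e = p (\<gamma> c) \<Longrightarrow>
    \<xi> (e', \<xi> (e, c)) = \<xi> (e', c)"
  using descent_data unfolding descent_data_def by blast

definition orbit :: "('c \<times> 'c) set" where
  "orbit = {(c, \<xi> (e, c)) | c e. c \<in> C \<and> e \<in> E \<and> p e = p (\<gamma> c)}"

lemma orbitI: "e \<in> E \<Longrightarrow> c \<in> C \<Longrightarrow> p e = p (\<gamma> c) \<Longrightarrow> (c, \<xi> (e, c)) \<in> orbit"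
  unfolding orbit_def by blast

lemma orbitE:
  assumes "(c, c') \<in> orbit"
  obtains e where "e \<in> E" "c \<in> C" "p e = p (\<gamma> c)" "c' = \<xi> (e, c)" "\<gamma> c' = e"
  using assms gamma_xi unfolding orbit_def by blast

lemma orbit_p_gamma: "(c, c') \<in> orbit \<Longrightarrow> p (\<gamma> c') = p (\<gamma> c)"
  by (erule orbitE) simp

lemma equiv_orbit: "equiv C orbit"
proof (rule equivI)
  show "orbit \<subseteq> C \<times> C"
  proof (rule subrelI)
    fix c c' assume "(c, c') \<in> orbit"
    then obtain e where "e \<in> E" "c \<in> C" "p e = p (\<gamma> c)" "c' = \<xi> (e, c)"
      by (rule orbitE)
    then show "(c, c') \<in> C \<times> C"
      using xi_in by simp
  qed
  show "refl_on C orbit"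
  proof (rule refl_onI)
    show "(c, c) \<in> orbit" if "c \<in> C" for c
      using orbitI[OF gamma_in[OF that] that] xi_gamma[OF that] by simp
  qed
  show "sym orbit"
  proof (rule symI)
    fix c c' assume "(c, c') \<in> orbit"
    then obtain e where e: "e \<in> E" "c \<in> C" "p e = p (\<gamma> c)" "c' = \<xi> (e, c)" "\<gamma> c' = e"
      by (rule orbitE)
    have "\<xi> (\<gamma> c, c') = c"
      using xi_xi[OF gamma_in[OF e(2)] e(1) e(2)] e(3,4) xi_gamma[OF e(2)] by simp
    moreover have "(c', \<xi> (\<gamma> c, c')) \<in> orbit"
      using orbitI[OF gamma_in[OF e(2)] xi_in[OF e(1-3)]] e(3-5) by simp
    ultimately show "(c', c) \<in> orbit"
      by simp
  qed
  show "trans orbit"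
  proof (rule transI)
    fix c c' c'' assume "(c, c') \<in> orbit" "(c', c'') \<in> orbit"
    obtain e where e: "e \<in> E" "c \<in> C" "p e = p (\<gamma> c)" "c' = \<xi> (e, c)" "\<gamma> c' = e"
      using \<open>(c, c') \<in> orbit\<close> by (rule orbitE)
    obtain e' where e': "e' \<in> E" "p e' = p (\<gamma> c')" "c'' = \<xi> (e', c')"
      using \<open>(c', c'') \<in> orbit\<close> by (rule orbitE)
    have "c'' = \<xi> (e', c)"
      using xi_xi[OF e'(1) e(1) e(2)] e e' by simp
    then show "(c, c'') \<in> orbit"
      using orbitI[OF e'(1) e(2)] e e' by simp
  qed
qed

lemma xi_gamma_orbit: "(c, c') \<in> orbit \<Longrightarrow> \<xi> (\<gamma> c', c) = c'"
  by (erule orbitE) simp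

text \<open>Continuity of \<open>\<xi>\<close> rewrites a closed \<open>V\<close> on the pullback as \<open>X' \<times> W\<close>; restricting to the
  diagonal \<open>(\<gamma> c, c)\<close> enlarges the representation \<open>S = V \<inter> \<gamma>\<^sup>-\<^sup>1(X)\<close> to one over \<open>W \<supseteq> V\<close>, so a
  maximal \<open>V\<close> satisfies \<open>W = V\<close>, and that equation is exactly saturation.\<close>
lemma closed_eq_saturated_Int_vimage:
  assumes "S \<in> CC"
  obtains V X where "V \<in> CC" "X \<in> CE" "orbit `` V \<subseteq> V" "S = {c \<in> V. \<gamma> c \<in> X}"
proof -
  define Q where "Q = {V \<in> CC. \<exists>X \<in> CE. S = {c \<in> V. \<gamma> c \<in> X}}"
  have "S \<in> Q"
    using assms closure_space_top[of E CE] fcls_E gamma_in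
      closure_space_subset[OF closure_space_C]
    unfolding Q_def fcls_def by blast
  moreover have "finite Q"
    using finite_C closure_space_subset[OF closure_space_C]
    by (intro finite_subset[of Q "Pow C"]) (auto simp: Q_def)
  ultimately obtain V where "V \<in> Q" and V_max: "\<And>W. W \<in> Q \<Longrightarrow> V \<subseteq> W \<Longrightarrow> V = W"
    using finite_has_maximal[of Q] by blast
  then obtain X where "V \<in> CC" "X \<in> CE" and S_eq: "S = {c \<in> V. \<gamma> c \<in> X}"
    unfolding Q_def by blast
  then have "{z \<in> pb_set E C p (p \<circ> \<gamma>). \<xi> z \<in> V} \<in> pb_cl E CE C CC p (p \<circ> \<gamma>)"
    using xi_mor unfolding cls_mor_def by blast
  then obtain X' W where "X' \<in> CE" "W \<in> CC" and pb_eq: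
      "{z \<in> pb_set E C p (p \<circ> \<gamma>). \<xi> z \<in> V} = {z \<in> pb_set E C p (p \<circ> \<gamma>). fst z \<in> X' \<and> snd z \<in> W}"
    unfolding pb_cl_def by blast
  have xi_V: "\<xi> (e, c) \<in> V \<longleftrightarrow> e \<in> X' \<and> c \<in> W" if "e \<in> E" "c \<in> C" "p e = p (\<gamma> c)" for e c
    using eqset_imp_iff[OF pb_eq, of "(e, c)"] that mem_pb_iff by simp
  have V_C: "V \<subseteq> C" and W_C: "W \<subseteq> C"
    using \<open>V \<in> CC\<close> \<open>W \<in> CC\<close> closure_space_subset[OF closure_space_C] by auto
  have W_V: "c \<in> V \<longleftrightarrow> \<gamma> c \<in> X'" if "c \<in> W" for c
    using xi_V[of "\<gamma> c" c] that W_C gamma_in xi_gamma by auto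
  have "V \<subseteq> W"
    using xi_V gamma_in xi_gamma V_C by fastforce
  moreover have "W \<in> Q"
  proof -
    have "X \<inter> X' \<in> CE"
      using closure_space_Int fcls_E \<open>X \<in> CE\<close> \<open>X' \<in> CE\<close> unfolding fcls_def by blast
    moreover have "S = {c \<in> W. \<gamma> c \<in> X \<inter> X'}"
      using S_eq W_V \<open>V \<subseteq> W\<close> by blast
    ultimately show ?thesis
      unfolding Q_def using \<open>W \<in> CC\<close> by blast
  qed
  ultimately have "W = V"
    using V_max by blast
  have "orbit `` V \<subseteq> V"
  proof
    fix c assume "c \<in> orbit `` V"
    then obtain v where "v \<in> V" "(v, c) \<in> orbit" by blast
    then have "(c, v) \<in> orbit" and "c \<in> C" and "p (\<gamma> c) = p (\<gamma> v)"
      using equiv_orbit orbit_p_gamma unfolding equiv_def sym_def refl_on_def by blast+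
    with \<open>v \<in> V\<close> have "\<xi> (\<gamma> v, c) \<in> V"
      by (simp add: xi_gamma_orbit)
    then show "c \<in> V"
      using xi_V[of "\<gamma> v" c] \<open>c \<in> C\<close> \<open>p (\<gamma> c) = p (\<gamma> v)\<close> gamma_in V_C \<open>v \<in> V\<close> \<open>W = V\<close>
      by auto
  qed
  with \<open>V \<in> CC\<close> \<open>X \<in> CE\<close> S_eq show thesis
    using that by blast
qed

end

text \<open>The quotient \<open>C/\<sim>\<close> is realised as the image of a map \<open>q\<close> into \<open>nat\<close> whose fibres are
  the orbits, because effective descent asks for slice objects carried by \<open>nat\<close>.\<close>
locale fcls_descent_classified = fcls_descent_datum +
  fixes q :: "'c \<Rightarrow> nat"
  assumes q_eq_iff: "c \<in> C \<Longrightarrow> c' \<in> C \<Longrightarrow> q c = q c' \<longleftrightarrow> (c, c') \<in> orbit"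
begin

definition \<alpha> where
  "\<alpha> k = p (\<gamma> (inv_into C q k))"

definition compare where
  "compare c = (\<gamma> c, q c)"

definition glue where
  "glue z = \<xi> (fst z, inv_into C q (snd z))"

lemma orbit_inv_into:
  assumes "c \<in> C"
  shows "(inv_into C q (q c), c) \<in> orbit"
proof -
  have "inv_into C q (q c) \<in> C" "q (inv_into C q (q c)) = q c"
    using assms by (auto intro: inv_into_into f_inv_into_f)
  then show ?thesis
    using q_eq_iff[of "inv_into C q (q c)" c] assms by simp
qed

lemma alpha_q: "c \<in> C \<Longrightarrow> \<alpha> (q c) = p (\<gamma> c)"
  unfolding \<alpha>_def using orbit_p_gamma[OF orbit_inv_into] by simp

lemma slice_obj_quotient: "slice_obj B CB (q ` C) (final_cl C CC q) \<alpha>"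
proof -
  have "cls_mor C CC B CB (p \<circ> \<gamma>)"
    using cls_mor_comp gamma_mor p_mor by blast
  then have "cls_mor C CC B CB (\<alpha> \<circ> q)"
    using cls_mor_cong[of C "\<alpha> \<circ> q" "p \<circ> \<gamma>"] alpha_q by simp
  then show ?thesis
    by (simp add: slice_obj_def fcls_final_cl[OF fcls_C] cls_mor_from_final_cl_iff)
qed

lemma
  assumes "(e, k) \<in> pb_set E (q ` C) p \<alpha>"
  shows glue_in: "glue (e, k) \<in> C"
    and gamma_glue: "\<gamma> (glue (e, k)) = e"
    and q_glue: "q (glue (e, k)) = k"
proof -
  let ?r = "inv_into C q k"
  have e: "e \<in> E" "p e = p (\<gamma> ?r)" and "k \<in> q ` C"
    using assms unfolding pb_set_def \<alpha>_def by auto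
  then have r: "?r \<in> C" "q ?r = k"
    by (auto intro: inv_into_into f_inv_into_f)
  show in_C: "glue (e, k) \<in> C" and "\<gamma> (glue (e, k)) = e"
    using xi_in[OF e(1) r(1) e(2)] gamma_xi[OF e(1) r(1) e(2)] unfolding glue_def by simp_all
  have "(?r, glue (e, k)) \<in> orbit"
    using orbitI[OF e(1) r(1) e(2)] unfolding glue_def by simp
  then show "q (glue (e, k)) = k"
    using q_eq_iff[OF r(1) in_C] r(2) by simp
qed

lemma q_mem_image_iff:
  assumes "V \<subseteq> C" and "orbit `` V \<subseteq> V" and "c \<in> C"
  shows "q c \<in> q ` V \<longleftrightarrow> c \<in> V"
proof
  assume "q c \<in> q ` V"
  then obtain v where "v \<in> V" "q v = q c"
    by auto
  then have "(v, c) \<in> orbit"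
    using q_eq_iff[of v c] assms(1,3) by auto
  with \<open>v \<in> V\<close> show "c \<in> V"
    using assms(2) by blast
qed simp

lemma des_mor_compare:
  "des_mor E CE B CB p C CC \<gamma> \<xi> (pb_set E (q ` C) p \<alpha>) (pb_cl E CE (q ` C) (final_cl C CC q) p \<alpha>)
     fst K_xi compare"
  unfolding des_mor_def
proof (intro conjI ballI)
  have "compare ` C \<subseteq> pb_set E (q ` C) p \<alpha>"
    using gamma_in alpha_q unfolding compare_def pb_set_def by auto
  moreover have "fst \<circ> compare = \<gamma>" "snd \<circ> compare = q"
    unfolding compare_def by auto
  ultimately show "cls_mor C CC (pb_set E (q ` C) p \<alpha>) (pb_cl E CE (q ` C) (final_cl C CC q) p \<alpha>) compare"
    by (intro cls_mor_into_pb closure_space_C) (simp_all add: gamma_mor cls_mor_final_cl)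
next
  fix z assume "z \<in> pb_set E C p (p \<circ> \<gamma>)"
  then obtain e c where z: "z = (e, c)" "e \<in> E" "c \<in> C" "p e = p (\<gamma> c)"
    unfolding pb_set_def by auto
  then have "q (\<xi> (e, c)) = q c"
    using q_eq_iff[of c "\<xi> (e, c)"] orbitI xi_in by simp
  with z show "compare (\<xi> z) = K_xi (fst z, compare (snd z))"
    using gamma_xi unfolding compare_def K_xi_def by simp
qed (simp add: compare_def)

lemma cls_mor_glue:
  "cls_mor (pb_set E (q ` C) p \<alpha>) (pb_cl E CE (q ` C) (final_cl C CC q) p \<alpha>) C CC glue"
  unfolding cls_mor_def
proof (intro conjI ballI)
  show "glue ` pb_set E (q ` C) p \<alpha> \<subseteq> C"
    using glue_in by auto
next
  fix S assume "S \<in> CC"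
  then obtain V X where "V \<in> CC" "X \<in> CE" and V_sat: "orbit `` V \<subseteq> V"
    and S_eq: "S = {c \<in> V. \<gamma> c \<in> X}"
    by (rule closed_eq_saturated_Int_vimage)
  have V_C: "V \<subseteq> C"
    using \<open>V \<in> CC\<close> closure_space_subset[OF closure_space_C] by blast
  have "{c \<in> C. q c \<in> q ` V} = V"
    using q_mem_image_iff[OF V_C V_sat] V_C by blast
  then have "q ` V \<in> final_cl C CC q"
    unfolding final_cl_def using \<open>V \<in> CC\<close> V_C by auto
  moreover have "{z \<in> pb_set E (q ` C) p \<alpha>. glue z \<in> S}
      = {z \<in> pb_set E (q ` C) p \<alpha>. fst z \<in> X \<and> snd z \<in> q ` V}"
    using glue_in gamma_glue q_glue q_mem_image_iff[OF V_C V_sat] unfolding S_eq by fastforce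
  ultimately show "{z \<in> pb_set E (q ` C) p \<alpha>. glue z \<in> S} \<in> pb_cl E CE (q ` C) (final_cl C CC q) p \<alpha>"
    unfolding pb_cl_def using \<open>X \<in> CE\<close> by blast
qed

lemma des_mor_glue:
  "des_mor E CE B CB p (pb_set E (q ` C) p \<alpha>) (pb_cl E CE (q ` C) (final_cl C CC q) p \<alpha>) fst K_xi
     C CC \<gamma> \<xi> glue"
  unfolding des_mor_def
proof (intro conjI ballI cls_mor_glue)
  show "\<gamma> (glue z) = fst z" if "z \<in> pb_set E (q ` C) p \<alpha>" for z
    using that gamma_glue by (cases z) auto
next
  fix z assume "z \<in> pb_set E (pb_set E (q ` C) p \<alpha>) p (p \<circ> fst)"
  then obtain e' e k where z: "z = (e', (e, k))" "e' \<in> E" "p e' = p e"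
    and ek: "(e, k) \<in> pb_set E (q ` C) p \<alpha>"
    unfolding pb_set_def by auto
  then have "e \<in> E" "k \<in> q ` C" "p e = \<alpha> k"
    unfolding pb_set_def by auto
  then have "p e = p (\<gamma> (inv_into C q k))" "inv_into C q k \<in> C"
    unfolding \<alpha>_def by (auto intro: inv_into_into)
  then show "glue (K_xi z) = \<xi> (fst z, glue (snd z))"
    using xi_xi[of e' e "inv_into C q k"] z \<open>e \<in> E\<close> unfolding glue_def K_xi_def by simp
qed

lemma glue_compare: "c \<in> C \<Longrightarrow> glue (compare c) = c"
  unfolding glue_def compare_def using xi_gamma_orbit[OF orbit_inv_into] by simp

lemma compare_glue: "z \<in> pb_set E (q ` C) p \<alpha> \<Longrightarrow> compare (glue z) = z"
  unfolding compare_def using gamma_glue q_glue by (cases z) auto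

lemma des_iso_compare:
  "des_iso E CE B CB p C CC \<gamma> \<xi> (pb_set E (q ` C) p \<alpha>) (pb_cl E CE (q ` C) (final_cl C CC q) p \<alpha>)
     fst K_xi compare"
  unfolding des_iso_def using des_mor_compare des_mor_glue glue_compare compare_glue by blast

end

lemma (in fcls_descent_datum) ex_des_iso_K:
  "\<exists>(A :: nat set) CA \<alpha> f. slice_obj B CB A CA \<alpha> \<and>
     des_iso E CE B CB p C CC \<gamma> \<xi> (pb_set E A p \<alpha>) (pb_cl E CE A CA p \<alpha>) fst K_xi f"
proof -
  obtain q :: "'c \<Rightarrow> nat" where "\<And>c c'. c \<in> C \<Longrightarrow> c' \<in> C \<Longrightarrow> q c = q c' \<longleftrightarrow> (c, c') \<in> orbit"
    using equiv_classifier_nat[OF finite_C equiv_orbit] by blast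
  then interpret fcls_descent_classified E CE B CB p C CC \<gamma> \<xi> q
    by unfold_locales
  show ?thesis
    using slice_obj_quotient des_iso_compare by blast
qed

theorem theorem4p3:
  fixes E :: "'e set" and CE :: "'e set set" and B :: "'b set" and CB :: "'b set set"
    and p :: "'e \<Rightarrow> 'b"
  assumes "fcls E CE" and "fcls B CB" and "cls_mor E CE B CB p"
    and "descent_morphism E CE B CB p"
  shows "effective_descent TYPE('c) E CE B CB p"
  unfolding effective_descent_def
proof (intro conjI allI impI)
  show "descent_morphism E CE B CB p" by fact
next
  fix C :: "'c set" and CC \<gamma> \<xi>
  assume "descent_data E CE B CB p C CC \<gamma> \<xi>"
  then interpret fcls_descent_datum E CE B CB p C CC \<gamma> \<xi>
    using assms by unfold_locales
  show "\<exists>(A :: nat set) CA \<alpha> f. slice_obj B CB A CA \<alpha> \<and>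
      des_iso E CE B CB p C CC \<gamma> \<xi> (pb_set E A p \<alpha>) (pb_cl E CE A CA p \<alpha>) fst K_xi f"
    by (rule ex_des_iso_K)
qed

end
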